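(* Let $G$ be a nontrivial cactus on $n$ vertices with $k$ cycles. Then \[R(G)\geq \frac{n-k-1}{2}+\sqrt k,\] with equality for a bouquet of cycles (a collection of $k$ cycles all sharing one common vertex and otherwise disjoint).
   Context: A cactus is a connected graph in which any two cycles share at most one vertex; it is nontrivial if it has no bridges (edges whose removal disconnects the graph). The Randi\'c index is $R(G)=\sum_{uv\in E(G)}\frac{1}{\sqrt{d_ud_v}}$, where $d_v$ is the degree of $v$. *)

theory Defs
  imports Complex_Main
begin

definition simple_graph :: "'a set \<Rightarrow> 'a set set \<Rightarrow> bool" where
  "simple_graph V E \<longleftrightarrow> finite V \<and>
     (\<forall>e\<in>E. \<exists>u v. e = {u, v} \<and> u \<noteq> v \<and> u \<in> V \<and> v \<in> V)"

definition adj :: "'a set set \<Rightarrow> 'a \<Rightarrow> 'a \<Rightarrow> bool" where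
  "adj E u v \<longleftrightarrow> {u, v} \<in> E"

definition connected_graph :: "'a set \<Rightarrow> 'a set set \<Rightarrow> bool" where
  "connected_graph V E \<longleftrightarrow> V \<noteq> {} \<and> (\<forall>u\<in>V. \<forall>v\<in>V. (adj E)\<^sup>*\<^sup>* u v)"

definition is_bridge :: "'a set \<Rightarrow> 'a set set \<Rightarrow> 'a set \<Rightarrow> bool" where
  "is_bridge V E e \<longleftrightarrow> e \<in> E \<and> \<not> connected_graph V (E - {e})"

definition degree :: "'a set set \<Rightarrow> 'a \<Rightarrow> nat" where
  "degree E v = card {e\<in>E. v \<in> e}"

definition randic :: "'a set set \<Rightarrow> real" where
  "randic E = (\<Sum>e\<in>E. 1 / sqrt (\<Prod>v\<in>e. real (degree E v)))"

definition cycle_list :: "'a set \<Rightarrow> 'a set set \<Rightarrow> 'a list \<Rightarrow> bool" where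
  "cycle_list V E xs \<longleftrightarrow> length xs \<ge> 3 \<and> distinct xs \<and> set xs \<subseteq> V \<and>
     (\<forall>i<length xs. {xs ! i, xs ! ((i + 1) mod length xs)} \<in> E)"

definition cycle_edges :: "'a list \<Rightarrow> 'a set set" where
  "cycle_edges xs = {{xs ! i, xs ! ((i + 1) mod length xs)} | i. i < length xs}"

definition cycles :: "'a set \<Rightarrow> 'a set set \<Rightarrow> 'a set set set" where
  "cycles V E = {cycle_edges xs | xs. cycle_list V E xs}"

definition num_cycles :: "'a set \<Rightarrow> 'a set set \<Rightarrow> nat" where
  "num_cycles V E = card (cycles V E)"

definition cactus :: "'a set \<Rightarrow> 'a set set \<Rightarrow> bool" where
  "cactus V E \<longleftrightarrow> simple_graph V E \<and> connected_graph V E \<and>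
     (\<forall>C1\<in>cycles V E. \<forall>C2\<in>cycles V E. C1 \<noteq> C2 \<longrightarrow> card (\<Union>C1 \<inter> \<Union>C2) \<le> 1)"

definition nontrivial_cactus :: "'a set \<Rightarrow> 'a set set \<Rightarrow> bool" where
  "nontrivial_cactus V E \<longleftrightarrow> cactus V E \<and> (\<forall>e\<in>E. \<not> is_bridge V E e)"

text \<open>Bouquet of cycles: a (nontrivial cactus) graph all of whose cycles pass through
  one common vertex c (every edge lies on a cycle since there are no bridges).\<close>
definition bouquet :: "'a set \<Rightarrow> 'a set set \<Rightarrow> bool" where
  "bouquet V E \<longleftrightarrow> (\<exists>c\<in>V. (\<forall>C\<in>cycles V E. c \<in> \<Union>C) \<and> E = \<Union>(cycles V E))"

end

theory Submission
  imports Defs "HOL-Library.Transitive_Closure_Table"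
begin

(* Write d v for the degree of v and x v = sqrt (2 / d v). In a connected bridgeless graph with
   an edge every degree is at least 2, so (1 - x u) * (1 - x v) >= 0 gives
   1 / sqrt (d u * d v) >= (x u + x v - 1) / 2 on every edge uv. Summing over the edges,
   R >= (sum of sqrt (2 * d v) over the vertices) / 2 - m / 2, and concavity of the square root,
   sqrt c + sqrt (c + x + y) <= sqrt (c + x) + sqrt (c + y), together with the handshake lemma
   bounds this below by (n - g - 1) / 2 + sqrt g for the cyclomatic number g = m - n + 1 >= 1.
   Adding an edge either merges two components or closes a new cycle, so g <= k, and
   t -> sqrt t - t / 2 is decreasing on [1, oo). The cactus structure is needed only for the
   equality: in a bouquet of k cycles (which pairwise share no edge) the centre has degree 2 k
   and every other vertex degree 2, and the index is computed directly. *)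

lemma simple_graph_edgeE:
  assumes "simple_graph V E" "e \<in> E"
  obtains u v where "e = {u, v}" "u \<noteq> v" "u \<in> V" "v \<in> V"
  using assms unfolding simple_graph_def by blast

lemma simple_graph_finite_vertices: "simple_graph V E \<Longrightarrow> finite V"
  unfolding simple_graph_def by blast

lemma simple_graph_edge_subset: "simple_graph V E \<Longrightarrow> e \<in> E \<Longrightarrow> e \<subseteq> V"
  by (erule simple_graph_edgeE) auto

lemma simple_graph_card_edge: "simple_graph V E \<Longrightarrow> e \<in> E \<Longrightarrow> card e = 2"
  by (erule simple_graph_edgeE) auto

lemma simple_graph_finite_edges: "simple_graph V E \<Longrightarrow> finite E"
  by (meson Pow_iff finite_Pow_iff finite_subset simple_graph_edge_subset
      simple_graph_finite_vertices subsetI)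

lemma simple_graph_subset: "simple_graph V E \<Longrightarrow> F \<subseteq> E \<Longrightarrow> simple_graph V F"
  unfolding simple_graph_def by blast

lemma symp_adj: "symp (adj E)"
  unfolding adj_def symp_def by (simp add: insert_commute)

lemma rtranclp_adj_sym: "(adj E)\<^sup>*\<^sup>* x y \<Longrightarrow> (adj E)\<^sup>*\<^sup>* y x"
  by (rule sympD[OF symp_rtranclp[OF symp_adj]])

lemma rtranclp_adj_mono: "E \<subseteq> F \<Longrightarrow> (adj E)\<^sup>*\<^sup>* x y \<Longrightarrow> (adj F)\<^sup>*\<^sup>* x y"
  by (metis adj_def mono_rtranclp subset_iff)

lemma rtranclp_adj_first_step:
  assumes "(adj E)\<^sup>*\<^sup>* v w" "v \<noteq> w"
  shows "\<exists>y. {v, y} \<in> E"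
  using assms by (cases rule: converse_rtranclpE) (auto simp: adj_def)

lemma cycles_subset: "C \<in> cycles V E \<Longrightarrow> C \<subseteq> E"
  unfolding cycles_def cycle_edges_def cycle_list_def by auto

lemma cycles_mono: "E \<subseteq> F \<Longrightarrow> cycles V E \<subseteq> cycles V F"
  unfolding cycles_def cycle_list_def by blast

lemma finite_cycles: "simple_graph V E \<Longrightarrow> finite (cycles V E)"
  by (meson Pow_iff cycles_subset finite_Pow_iff finite_subset simple_graph_finite_edges subsetI)

lemma cycles_empty: "cycles V {} = {}"
  unfolding cycles_def cycle_list_def by fastforce

lemma cycle_through_new_edge:
  assumes sg: "simple_graph V F" and "u \<in> V" "u \<noteq> v" "{u, v} \<notin> F"
    and "(adj F)\<^sup>*\<^sup>* u v"
  shows "\<exists>C\<in>cycles V (insert {u, v} F). {u, v} \<in> C"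
proof -
  obtain ps where path: "rtrancl_path (adj F) u ps v" and "distinct (u # ps)"
    using \<open>(adj F)\<^sup>*\<^sup>* u v\<close> rtrancl_path_distinct unfolding rtranclp_eq_rtrancl_path by metis
  define xs where "xs = u # ps"
  have "ps \<noteq> []" using path \<open>u \<noteq> v\<close> by (auto elim: rtrancl_path.cases)
  have last: "xs ! length ps = v"
    using rtrancl_path_last[OF path \<open>ps \<noteq> []\<close>] \<open>ps \<noteq> []\<close> unfolding xs_def
    by (simp add: last_conv_nth)
  have step: "{xs ! i, xs ! (i + 1)} \<in> F" if "i < length ps" for i
    using rtrancl_path_nth[OF path that] unfolding xs_def adj_def by simp
  have "length ps \<noteq> 1"
  proof
    assume "length ps = 1"
    then have "{xs ! 0, xs ! 1} \<in> F" using step[of 0] by simp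
    then show False using last \<open>length ps = 1\<close> \<open>{u, v} \<notin> F\<close> unfolding xs_def by simp
  qed
  then have len: "length xs \<ge> 3" using \<open>ps \<noteq> []\<close> unfolding xs_def by (cases "length ps") auto
  have "set ps \<subseteq> V"
    using step simple_graph_edge_subset[OF sg] unfolding xs_def by (fastforce simp: in_set_conv_nth)
  have closing: "{xs ! length ps, xs ! ((length ps + 1) mod length xs)} = {u, v}"
    using last unfolding xs_def by auto
  have "cycle_list V (insert {u, v} F) xs"
    unfolding cycle_list_def
  proof (intro conjI allI impI)
    fix i assume "i < length xs"
    then consider "i < length ps" | "i = length ps" unfolding xs_def by fastforce
    then show "{xs ! i, xs ! ((i + 1) mod length xs)} \<in> insert {u, v} F"
      by cases (use step closing in \<open>auto simp: xs_def\<close>)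
  qed (use len \<open>distinct (u # ps)\<close> \<open>set ps \<subseteq> V\<close> \<open>u \<in> V\<close> in \<open>auto simp: xs_def\<close>)
  moreover have "{u, v} \<in> cycle_edges xs"
    unfolding cycle_edges_def using closing[symmetric] by (auto simp: xs_def)
  ultimately show ?thesis unfolding cycles_def by blast
qed

definition component :: "'a set \<Rightarrow> 'a set set \<Rightarrow> 'a \<Rightarrow> 'a set" where
  "component V E x = {y \<in> V. (adj E)\<^sup>*\<^sup>* x y}"

definition components :: "'a set \<Rightarrow> 'a set set \<Rightarrow> 'a set set" where
  "components V E = component V E ` V"

lemma component_eq: "(adj E)\<^sup>*\<^sup>* x y \<Longrightarrow> component V E x = component V E y"
  unfolding component_def by (meson rtranclp_adj_sym rtranclp_trans)

lemma Union_component_supergraph: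
  assumes "F \<subseteq> F'" "x \<in> V"
  shows "\<Union> (component V F' ` component V F x) = component V F' x"
proof -
  have "component V F' y = component V F' x" if "y \<in> component V F x" for y
  proof -
    have "(adj F)\<^sup>*\<^sup>* x y" using that unfolding component_def by simp
    then show ?thesis by (intro component_eq[symmetric] rtranclp_adj_mono[OF assms(1)])
  qed
  moreover have "x \<in> component V F x" using \<open>x \<in> V\<close> unfolding component_def by simp
  ultimately show ?thesis by blast
qed

lemma components_supergraph:
  "F \<subseteq> F' \<Longrightarrow> components V F' = (\<lambda>C. \<Union> (component V F' ` C)) ` components V F"
  unfolding components_def image_image by (simp add: Union_component_supergraph cong: image_cong)

lemma card_components_antimono:
  "finite V \<Longrightarrow> F \<subseteq> F' \<Longrightarrow> card (components V F') \<le> card (components V F)"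
  unfolding components_supergraph[of F F' V] by (simp add: card_image_le components_def)

lemma card_components_merge:
  assumes "finite V" "F \<subseteq> F'" "u \<in> V" "v \<in> V" "(adj F')\<^sup>*\<^sup>* u v" "\<not> (adj F)\<^sup>*\<^sup>* u v"
  shows "card (components V F') < card (components V F)"
proof -
  let ?h = "\<lambda>C. \<Union> (component V F' ` C)"
  have "component V F u \<noteq> component V F v"
    using assms(4,6) unfolding component_def by auto
  moreover have "?h (component V F u) = ?h (component V F v)"
    using Union_component_supergraph[OF assms(2)] component_eq[OF assms(5)] assms(3,4) by simp
  ultimately have "\<not> inj_on ?h (components V F)"
    using assms(3,4) unfolding components_def inj_on_def by blast
  moreover have "finite (components V F)" using assms(1) unfolding components_def by simp
  ultimately have "card (components V F') \<noteq> card (components V F)"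
    unfolding components_supergraph[OF assms(2)] by (simp add: inj_on_iff_eq_card)
  then show ?thesis using card_components_antimono[OF assms(1,2)] by simp
qed

lemma card_components_connected: "connected_graph V E \<Longrightarrow> card (components V E) = 1"
proof -
  assume conn: "connected_graph V E"
  then have "component V E x = V" if "x \<in> V" for x
    using that unfolding connected_graph_def component_def by auto
  then have "components V E = {V}"
    using conn unfolding components_def connected_graph_def by auto
  then show ?thesis by simp
qed

lemma card_edges_components_le:
  assumes "simple_graph V E"
  shows "card E + card (components V E) \<le> card V + num_cycles V E"
  using simple_graph_finite_edges[OF assms] assms
proof (induction E rule: finite_induct)
  case empty
  have "card (components V {}) \<le> card V"
    unfolding components_def by (rule card_image_le[OF simple_graph_finite_vertices[OF empty.prems]])
  then show ?case by simp
next
  case (insert e F)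
  let ?F' = "insert e F"
  have sg: "simple_graph V F" using simple_graph_subset[OF insert.prems] by blast
  have "finite V" using simple_graph_finite_vertices[OF sg] .
  obtain u v where e: "e = {u, v}" "u \<noteq> v" "u \<in> V" "v \<in> V"
    using simple_graph_edgeE[OF insert.prems] by blast
  have card_edges: "card ?F' = card F + 1" using insert.hyps by simp
  have cycles_sub: "cycles V F \<subseteq> cycles V ?F'" by (rule cycles_mono) blast
  have fin_cycles: "finite (cycles V ?F')" by (rule finite_cycles[OF insert.prems])
  show ?case
  proof (cases "(adj F)\<^sup>*\<^sup>* u v")
    case True
    then obtain C where C: "C \<in> cycles V ?F'" "e \<in> C"
      using cycle_through_new_edge[OF sg] e insert.hyps by blast
    then have "C \<notin> cycles V F" using cycles_subset insert.hyps by blast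
    then have "card (cycles V F) < card (cycles V ?F')"
      using C(1) cycles_sub by (intro psubset_card_mono[OF fin_cycles]) blast
    moreover have "card (components V ?F') \<le> card (components V F)"
      by (rule card_components_antimono[OF \<open>finite V\<close>]) blast
    ultimately show ?thesis using insert.IH[OF sg] card_edges unfolding num_cycles_def by linarith
  next
    case False
    have "(adj ?F')\<^sup>*\<^sup>* u v" using e unfolding adj_def by auto
    then have "card (components V ?F') < card (components V F)"
      using card_components_merge[OF \<open>finite V\<close> _ e(3,4) _ False] by blast
    moreover have "card (cycles V F) \<le> card (cycles V ?F')" by (rule card_mono[OF fin_cycles cycles_sub])
    ultimately show ?thesis using insert.IH[OF sg] card_edges unfolding num_cycles_def by linarith
  qed
qed

lemma degree_ge_2_if_bridgeless:
  assumes sg: "simple_graph V E" and conn: "connected_graph V E"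
    and no_bridge: "\<forall>e\<in>E. \<not> is_bridge V E e" and "E \<noteq> {}" and "v \<in> V"
  shows "2 \<le> degree E v"
proof -
  obtain e where "e \<in> E" using \<open>E \<noteq> {}\<close> by blast
  then obtain w where "w \<in> V" "w \<noteq> v"
    by (rule simple_graph_edgeE[OF sg]) (metis doubleton_eq_iff)
  then have "(adj E)\<^sup>*\<^sup>* v w" using conn \<open>v \<in> V\<close> unfolding connected_graph_def by blast
  then obtain y where vy: "{v, y} \<in> E" using rtranclp_adj_first_step \<open>w \<noteq> v\<close> by metis
  then obtain a b where "{v, y} = {a, b}" "a \<noteq> b" "a \<in> V" "b \<in> V" by (rule simple_graph_edgeE[OF sg])
  then have "y \<in> V" "v \<noteq> y" by (auto simp: doubleton_eq_iff)
  then have "(adj (E - {{v, y}}))\<^sup>*\<^sup>* v y"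
    using no_bridge vy \<open>v \<in> V\<close> unfolding is_bridge_def connected_graph_def by blast
  then obtain z where vz: "{v, z} \<in> E - {{v, y}}" using rtranclp_adj_first_step \<open>v \<noteq> y\<close> by metis
  have "{{v, y}, {v, z}} \<subseteq> {e \<in> E. v \<in> e}" using vy vz by auto
  then have "card {{v, y}, {v, z}} \<le> degree E v"
    unfolding degree_def by (rule card_mono[rotated]) (simp add: simple_graph_finite_edges[OF sg])
  moreover have "card {{v, y}, {v, z}} = 2" using vz by (auto simp: card_insert_if)
  ultimately show ?thesis by simp
qed

lemma sum_edges_sum_endpoints:
  fixes f :: "'a \<Rightarrow> real"
  assumes "simple_graph V E"
  shows "(\<Sum>e\<in>E. \<Sum>v\<in>e. f v) = (\<Sum>v\<in>V. real (degree E v) * f v)"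
proof -
  have "(\<Sum>e\<in>E. \<Sum>v\<in>e. f v) = (\<Sum>e\<in>E. \<Sum>v\<in>{v\<in>V. v \<in> e}. f v)"
    using simple_graph_edge_subset[OF assms] by (intro sum.cong) (auto intro: arg_cong2[where f = sum])
  also have "\<dots> = (\<Sum>v\<in>V. \<Sum>e\<in>{e\<in>E. v \<in> e}. f v)"
    using simple_graph_finite_edges[OF assms] simple_graph_finite_vertices[OF assms]
    by (rule sum.swap_restrict)
  finally show ?thesis unfolding degree_def by simp
qed

lemma sum_degree:
  assumes "simple_graph V E"
  shows "(\<Sum>v\<in>V. real (degree E v)) = 2 * real (card E)"
  using sum_edges_sum_endpoints[OF assms, of "\<lambda>_. 1"] simple_graph_card_edge[OF assms] by simp

lemma inverse_sqrt_mult_ge: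
  fixes p q :: real
  assumes "2 \<le> p" "2 \<le> q"
  shows "(sqrt (2 / p) + sqrt (2 / q) - 1) / 2 \<le> 1 / sqrt (p * q)"
proof -
  define x y where "x = sqrt (2 / p)" and "y = sqrt (2 / q)"
  have "x \<le> 1" "y \<le> 1" using assms unfolding x_def y_def by simp_all
  then have "x + y - 1 \<le> x * y" using mult_nonneg_nonneg[of "1 - x" "1 - y"] by (simp add: algebra_simps)
  moreover have "x * y = 2 / sqrt (p * q)"
    using assms unfolding x_def y_def by (simp add: real_sqrt_mult[symmetric] real_sqrt_divide)
  ultimately show ?thesis unfolding x_def y_def by simp
qed

lemma sqrt_add_subadditive:
  fixes c x y :: real
  assumes "0 \<le> c" "0 \<le> x" "0 \<le> y"
  shows "sqrt c + sqrt (c + x + y) \<le> sqrt (c + x) + sqrt (c + y)"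
proof (rule power2_le_imp_le)
  have "sqrt (c * (c + x + y)) \<le> sqrt ((c + x) * (c + y))"
    using assms by (intro real_sqrt_le_mono) (simp add: algebra_simps)
  then show "(sqrt c + sqrt (c + x + y))\<^sup>2 \<le> (sqrt (c + x) + sqrt (c + y))\<^sup>2"
    using assms by (simp add: power2_sum real_sqrt_mult)
qed (use assms in simp)

lemma sum_sqrt_add_ge:
  fixes a :: "'a \<Rightarrow> real"
  assumes "finite A" "0 \<le> c" "\<And>v. v \<in> A \<Longrightarrow> 0 \<le> a v"
  shows "(real (card A) - 1) * sqrt c + sqrt (c + sum a A) \<le> (\<Sum>v\<in>A. sqrt (c + a v))"
  using assms(1,3)
proof (induction A rule: finite_induct)
  case (insert w A)
  have "sqrt c + sqrt (c + sum a A + a w) \<le> sqrt (c + sum a A) + sqrt (c + a w)"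
    using insert.prems by (intro sqrt_add_subadditive[OF assms(2)] sum_nonneg) auto
  then show ?case using insert by (simp add: algebra_simps)
qed simp

lemma sqrt_minus_half_antimono:
  fixes s t :: real
  assumes "1 \<le> s" "s \<le> t"
  shows "sqrt t - t / 2 \<le> sqrt s - s / 2"
proof -
  have "1 \<le> sqrt s" "sqrt s \<le> sqrt t" using assms by simp_all
  then have "0 \<le> (sqrt t - sqrt s) * (sqrt t + sqrt s - 2)" by (intro mult_nonneg_nonneg) linarith+
  then show ?thesis using assms by (simp add: algebra_simps)
qed

definition cyclomatic_number :: "'a set \<Rightarrow> 'a set set \<Rightarrow> real" where
  "cyclomatic_number V E = real (card E) - real (card V) + 1"

lemma cyclomatic_number_le_num_cycles:
  assumes "simple_graph V E" "connected_graph V E"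
  shows "cyclomatic_number V E \<le> real (num_cycles V E)"
proof -
  have "card E + 1 \<le> card V + num_cycles V E"
    using card_edges_components_le[OF assms(1)] card_components_connected[OF assms(2)] by simp
  then have "real (card E + 1) \<le> real (card V + num_cycles V E)" by (rule of_nat_mono)
  then show ?thesis unfolding cyclomatic_number_def by simp
qed

lemma one_le_cyclomatic_number:
  assumes "simple_graph V E" "\<forall>v\<in>V. 2 \<le> degree E v"
  shows "1 \<le> cyclomatic_number V E"
proof -
  have "(\<Sum>v\<in>V. 2) \<le> (\<Sum>v\<in>V. real (degree E v))" using assms(2) by (intro sum_mono) simp
  then show ?thesis using sum_degree[OF assms(1)] unfolding cyclomatic_number_def by simp
qed

lemma randic_ge_cyclomatic:
  assumes sg: "simple_graph V E" and min_degree: "\<forall>v\<in>V. 2 \<le> degree E v"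
  defines "\<gamma> \<equiv> cyclomatic_number V E"
  shows "(real (card V) - \<gamma> - 1) / 2 + sqrt \<gamma> \<le> randic E"
proof -
  define d where "d v = real (degree E v)" for v
  define n m where "n = real (card V)" and "m = real (card E)"
  have d2: "2 \<le> d v" if "v \<in> V" for v using min_degree that unfolding d_def by simp
  have edge_bound: "(\<Sum>v\<in>e. sqrt (2 / d v)) / 2 - 1 / 2 \<le> 1 / sqrt (\<Prod>v\<in>e. d v)" if "e \<in> E" for e
  proof -
    obtain a b where "e = {a, b}" "a \<noteq> b" "a \<in> V" "b \<in> V"
      using simple_graph_edgeE[OF sg \<open>e \<in> E\<close>] .
    then show ?thesis using inverse_sqrt_mult_ge[OF d2 d2, of a b] by (simp add: diff_divide_distrib)
  qed
  have "(\<Sum>e\<in>E. \<Sum>v\<in>e. sqrt (2 / d v)) = (\<Sum>v\<in>V. d v * sqrt (2 / d v))"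
    unfolding d_def by (rule sum_edges_sum_endpoints[OF sg])
  also have "\<dots> = (\<Sum>v\<in>V. sqrt (4 + (2 * d v - 4)))"
  proof (rule sum.cong[OF refl])
    fix v assume "v \<in> V"
    then have "d v * sqrt (2 / d v) = sqrt (d v ^ 2) * sqrt (2 / d v)" using d2[OF \<open>v \<in> V\<close>] by simp
    also have "\<dots> = sqrt (2 * d v)"
      unfolding real_sqrt_mult[symmetric] using d2[OF \<open>v \<in> V\<close>] by (simp add: power2_eq_square)
    finally show "d v * sqrt (2 / d v) = sqrt (4 + (2 * d v - 4))" by simp
  qed
  also have "\<dots> \<ge> (n - 1) * sqrt 4 + sqrt (4 + (\<Sum>v\<in>V. 2 * d v - 4))"
    unfolding n_def using d2 simple_graph_finite_vertices[OF sg] by (intro sum_sqrt_add_ge) auto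
  finally have vertex_bound:
    "2 * (n - 1) + sqrt (4 + (\<Sum>v\<in>V. 2 * d v - 4)) \<le> (\<Sum>e\<in>E. \<Sum>v\<in>e. sqrt (2 / d v))"
    by simp
  have "(\<Sum>v\<in>V. 2 * d v - 4) = 4 * (\<gamma> - 1)"
    using sum_degree[OF sg] unfolding d_def \<gamma>_def cyclomatic_number_def
    by (simp add: sum_subtractf sum_distrib_left[symmetric] n_def m_def)
  then have root_eq: "sqrt (4 + (\<Sum>v\<in>V. 2 * d v - 4)) = 2 * sqrt \<gamma>"
    by (simp add: real_sqrt_mult algebra_simps)
  have "randic E = (\<Sum>e\<in>E. 1 / sqrt (\<Prod>v\<in>e. d v))" unfolding randic_def d_def ..
  also have "\<dots> \<ge> (\<Sum>e\<in>E. (\<Sum>v\<in>e. sqrt (2 / d v)) / 2 - 1 / 2)" by (rule sum_mono) (rule edge_bound)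
  also have "(\<Sum>e\<in>E. (\<Sum>v\<in>e. sqrt (2 / d v)) / 2 - 1 / 2)
      = (\<Sum>e\<in>E. \<Sum>v\<in>e. sqrt (2 / d v)) / 2 - m / 2"
    unfolding m_def by (simp add: sum_subtractf sum_divide_distrib)
  finally have "n - 1 + sqrt \<gamma> - m / 2 \<le> randic E"
    using vertex_bound root_eq by simp
  then show ?thesis unfolding \<gamma>_def cyclomatic_number_def n_def m_def by (simp add: diff_divide_distrib)
qed

lemma card_cycle_edges_at_vertex:
  assumes "C \<in> cycles V E" "w \<in> \<Union>C"
  shows "card {e \<in> C. w \<in> e} = 2"
proof -
  obtain xs where C: "C = cycle_edges xs" and cl: "cycle_list V E xs"
    using assms(1) unfolding cycles_def by blast
  define L where "L = length xs"
  define edge where "edge i = {xs ! i, xs ! ((i + 1) mod L)}" for i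
  have "3 \<le> L" "distinct xs" using cl unfolding cycle_list_def L_def by simp_all
  have C_eq: "C = edge ` {..<L}" unfolding C cycle_edges_def edge_def L_def by auto
  have nth_eq: "xs ! i = xs ! j \<longleftrightarrow> i = j" if "i < L" "j < L" for i j
    using \<open>distinct xs\<close> that unfolding L_def by (simp add: nth_eq_iff_index_eq)
  have succ: "(i + 1) mod L < L" for i using \<open>3 \<le> L\<close> by simp
  obtain i where "i < L" "w \<in> edge i" using assms(2) unfolding C_eq by blast
  then have "\<exists>j<L. w = xs ! j" using succ unfolding edge_def by blast
  then obtain j where j: "j < L" "w = xs ! j" by blast
  define prev where "prev = (j + L - 1) mod L"
  have "prev < L" using \<open>3 \<le> L\<close> unfolding prev_def by simp
  have pred: "(i + 1) mod L = j \<longleftrightarrow> i = prev" if "i < L" for i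
    using that j(1) \<open>3 \<le> L\<close> unfolding prev_def by (auto simp: mod_if)
  have "w \<in> edge i \<longleftrightarrow> i = j \<or> i = prev" if "i < L" for i
  proof -
    have "w \<in> edge i \<longleftrightarrow> xs ! i = xs ! j \<or> xs ! ((i + 1) mod L) = xs ! j"
      unfolding edge_def j(2) by auto
    also have "\<dots> \<longleftrightarrow> i = j \<or> (i + 1) mod L = j" using nth_eq that j(1) succ by simp
    finally show ?thesis using pred[OF that] by simp
  qed
  then have incident: "{e \<in> C. w \<in> e} = {edge j, edge prev}"
    unfolding C_eq using j(1) \<open>prev < L\<close> by blast
  have "(j + 1) mod L \<noteq> j" "(j + 1) mod L \<noteq> prev"
    using j(1) \<open>3 \<le> L\<close> unfolding prev_def by (auto simp: mod_if)
  then have "xs ! ((j + 1) mod L) \<notin> {xs ! prev, xs ! j}"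
    using nth_eq succ j(1) \<open>prev < L\<close> by simp
  moreover have "edge prev = {xs ! prev, xs ! j}" unfolding edge_def using pred[OF \<open>prev < L\<close>] by simp
  ultimately have "edge j \<noteq> edge prev" unfolding edge_def by blast
  then show ?thesis unfolding incident by simp
qed

lemma cactus_cycles_eqI:
  assumes cac: "cactus V E" and C: "C1 \<in> cycles V E" "C2 \<in> cycles V E"
    and "a \<in> \<Union>C1" "a \<in> \<Union>C2" "b \<in> \<Union>C1" "b \<in> \<Union>C2" "a \<noteq> b"
  shows "C1 = C2"
proof (rule ccontr)
  assume "C1 \<noteq> C2"
  then have "card (\<Union>C1 \<inter> \<Union>C2) \<le> 1" using cac C unfolding cactus_def by blast
  moreover have sg: "simple_graph V E" using cac unfolding cactus_def by blast
  then have "\<Union>C1 \<subseteq> V" using cycles_subset[OF C(1)] simple_graph_edge_subset by blast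
  then have "finite (\<Union>C1 \<inter> \<Union>C2)" using simple_graph_finite_vertices[OF sg] finite_subset by blast
  then have "card {a, b} \<le> card (\<Union>C1 \<inter> \<Union>C2)" using assms(4-7) by (intro card_mono) auto
  ultimately show False using \<open>a \<noteq> b\<close> by simp
qed

lemma cactus_cycles_edge_disjoint:
  assumes cac: "cactus V E" and C: "C \<in> cycles V E" "C' \<in> cycles V E" "C \<noteq> C'"
  shows "C \<inter> C' = {}"
proof (rule ccontr)
  assume "C \<inter> C' \<noteq> {}"
  then obtain e where e: "e \<in> C" "e \<in> C'" by blast
  have sg: "simple_graph V E" using cac unfolding cactus_def by blast
  obtain a b where ab: "e = {a, b}" "a \<noteq> b"
    using simple_graph_edgeE[OF sg] cycles_subset[OF C(1)] e(1) by blast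
  have "a \<in> \<Union>C" "a \<in> \<Union>C'" "b \<in> \<Union>C" "b \<in> \<Union>C'" using e ab(1) by blast+
  then have "C = C'" by (rule cactus_cycles_eqI[OF cac C(1,2) _ _ _ _ ab(2)])
  with C(3) show False ..
qed

lemma bouquet_degree_center:
  assumes cac: "cactus V E" and center: "\<forall>C\<in>cycles V E. c \<in> \<Union>C" and E: "E \<subseteq> \<Union>(cycles V E)"
  shows "degree E c = 2 * num_cycles V E"
proof -
  have sg: "simple_graph V E" using cac unfolding cactus_def by blast
  have "finite C" if "C \<in> cycles V E" for C
    using cycles_subset[OF that] simple_graph_finite_edges[OF sg] by (rule finite_subset)
  moreover have "{e \<in> C. c \<in> e} \<inter> {e \<in> C'. c \<in> e} = {}"
    if "C \<in> cycles V E" "C' \<in> cycles V E" "C \<noteq> C'" for C C'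
    using cactus_cycles_edge_disjoint[OF cac that] by blast
  ultimately have "card (\<Union>C\<in>cycles V E. {e \<in> C. c \<in> e}) = (\<Sum>C\<in>cycles V E. card {e \<in> C. c \<in> e})"
    by (intro card_UN_disjoint finite_cycles[OF sg]) simp_all
  also have "\<dots> = (\<Sum>C\<in>cycles V E. 2)"
  proof (rule sum.cong[OF refl])
    fix C assume "C \<in> cycles V E"
    with center show "card {e \<in> C. c \<in> e} = 2" by (simp add: card_cycle_edges_at_vertex)
  qed
  also have "(\<Union>C\<in>cycles V E. {e \<in> C. c \<in> e}) = {e \<in> E. c \<in> e}"
  proof
    show "(\<Union>C\<in>cycles V E. {e \<in> C. c \<in> e}) \<subseteq> {e \<in> E. c \<in> e}" using cycles_subset by blast
    show "{e \<in> E. c \<in> e} \<subseteq> (\<Union>C\<in>cycles V E. {e \<in> C. c \<in> e})" using E by blast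
  qed
  finally show ?thesis unfolding degree_def num_cycles_def by simp
qed

lemma bouquet_degree_other:
  assumes cac: "cactus V E" and center: "\<forall>C\<in>cycles V E. c \<in> \<Union>C" and E: "E \<subseteq> \<Union>(cycles V E)"
    and "c \<in> V" "w \<in> V" "w \<noteq> c"
  shows "degree E w = 2"
proof -
  have "(adj E)\<^sup>*\<^sup>* w c" using cac assms(4,5) unfolding cactus_def connected_graph_def by blast
  then obtain y where "{w, y} \<in> E" using rtranclp_adj_first_step \<open>w \<noteq> c\<close> by metis
  then have "{w, y} \<in> \<Union>(cycles V E)" using E by (rule subsetD[rotated])
  then obtain C1 where C1: "C1 \<in> cycles V E" "{w, y} \<in> C1" by (rule UnionE)
  have "{e \<in> E. w \<in> e} = {e \<in> C1. w \<in> e}"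
  proof (intro equalityI subsetI)
    fix e assume "e \<in> {e \<in> E. w \<in> e}"
    then have "e \<in> \<Union>(cycles V E)" "w \<in> e" using E by auto
    then obtain C where "C \<in> cycles V E" "e \<in> C" "w \<in> e" by (auto elim: UnionE)
    then have "C = C1" using cactus_cycles_eqI[OF cac _ C1(1), of C w c] center C1 \<open>w \<noteq> c\<close> by blast
    then show "e \<in> {e \<in> C1. w \<in> e}" using \<open>e \<in> C\<close> \<open>w \<in> e\<close> by blast
  qed (use cycles_subset[OF C1(1)] in blast)
  moreover have "w \<in> \<Union>C1" using C1(2) by blast
  ultimately show ?thesis unfolding degree_def using card_cycle_edges_at_vertex[OF C1(1)] by simp
qed

lemma divide_sqrt_double: "0 \<le> (x::real) \<Longrightarrow> x / sqrt (2 * x) = sqrt (x / 2)"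
proof (cases "x = 0")
  case False
  assume "0 \<le> x"
  have "sqrt (2 * x) * sqrt (x / 2) = x" using \<open>0 \<le> x\<close> by (simp flip: real_sqrt_mult)
  then show ?thesis using False \<open>0 \<le> x\<close> by (simp add: field_simps)
qed simp

lemma randic_degree_2_except:
  assumes sg: "simple_graph V E" and "\<forall>w\<in>V - {c}. degree E w = 2"
  shows "randic E = (real (card E) - real (degree E c)) / 2 + sqrt (real (degree E c) / 2)"
proof -
  let ?d = "real (degree E c)"
  have "(\<Prod>v\<in>e. real (degree E v)) = (if c \<in> e then 2 * ?d else 4)" if e: "e \<in> E" for e
  proof -
    obtain u v where "e = {u, v}" "u \<noteq> v" "u \<in> V" "v \<in> V" using simple_graph_edgeE[OF sg e] .
    then show ?thesis using assms(2) by (cases "u = c"; cases "v = c") auto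
  qed
  then have "randic E = (\<Sum>e\<in>E. if c \<in> e then 1 / sqrt (2 * ?d) else 1 / 2)"
    unfolding randic_def by (intro sum.cong) auto
  also have "\<dots> = ?d / sqrt (2 * ?d) + real (card E - degree E c) / 2"
  proof -
    have "E \<inter> {e. c \<in> e} = {e \<in> E. c \<in> e}" "E \<inter> - {e. c \<in> e} = E - {e \<in> E. c \<in> e}" by blast+
    then show ?thesis
      using simple_graph_finite_edges[OF sg] by (simp add: sum.If_cases degree_def card_Diff_subset)
  qed
  also have "real (card E - degree E c) = real (card E) - ?d"
    unfolding degree_def by (rule of_nat_diff) (simp add: card_mono simple_graph_finite_edges[OF sg])
  finally show ?thesis by (simp add: divide_sqrt_double)
qed

lemma randic_bouquet:
  assumes cac: "cactus V E" and "bouquet V E"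
  shows "randic E = (real (card V) - real (num_cycles V E) - 1) / 2 + sqrt (real (num_cycles V E))"
proof -
  have sg: "simple_graph V E" using cac unfolding cactus_def by blast
  obtain c where c: "c \<in> V" "\<forall>C\<in>cycles V E. c \<in> \<Union>C" "E = \<Union>(cycles V E)"
    using \<open>bouquet V E\<close> unfolding bouquet_def by blast
  let ?k = "real (num_cycles V E)"
  have deg_c: "real (degree E c) = 2 * ?k"
    using bouquet_degree_center[OF cac c(2) equalityD1[OF c(3)]] by simp
  have deg_other: "\<forall>w\<in>V - {c}. degree E w = 2"
    using bouquet_degree_other[OF cac c(2) equalityD1[OF c(3)] c(1)] by blast
  have "2 * real (card E) = real (degree E c) + (\<Sum>w\<in>V - {c}. real (degree E w))"
    using sum_degree[OF sg]
      sum.remove[OF simple_graph_finite_vertices[OF sg] c(1), of "\<lambda>w. real (degree E w)"]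
    by linarith
  also have "\<dots> = 2 * ?k + 2 * (real (card V) - 1)"
  proof -
    have "card V \<ge> 1"
      using c(1) simple_graph_finite_vertices[OF sg] by (auto simp: Suc_le_eq card_gt_0_iff)
    then show ?thesis
      using deg_c deg_other c(1) simple_graph_finite_vertices[OF sg] by (simp add: of_nat_diff)
  qed
  finally have "real (card E) = ?k + real (card V) - 1" by simp
  then show ?thesis using randic_degree_2_except[OF sg deg_other] deg_c by simp
qed

lemma bouquet_edgeless: "V \<noteq> {} \<Longrightarrow> bouquet V {}"
  unfolding bouquet_def cycles_empty by blast

theorem corollary4p4:
  fixes V :: "'a set" and E :: "'a set set"
  assumes "nontrivial_cactus V E"
  shows "randic E \<ge> (real (card V) - real (num_cycles V E) - 1) / 2 + sqrt (real (num_cycles V E)) \<and>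
         (bouquet V E \<longrightarrow>
          randic E = (real (card V) - real (num_cycles V E) - 1) / 2 + sqrt (real (num_cycles V E)))"
proof -
  have cac: "cactus V E" and no_bridge: "\<forall>e\<in>E. \<not> is_bridge V E e"
    using assms unfolding nontrivial_cactus_def by blast+
  then have sg: "simple_graph V E" and conn: "connected_graph V E" unfolding cactus_def by blast+
  let ?k = "real (num_cycles V E)"
  have "(real (card V) - ?k - 1) / 2 + sqrt ?k \<le> randic E"
  proof (cases "E = {}")
    case True
    \<comment> \<open>a single vertex, where the minimum degree argument fails\<close>
    have "V \<noteq> {}" using conn unfolding connected_graph_def by blast
    then have "bouquet V E" unfolding True by (rule bouquet_edgeless)
    then show ?thesis using randic_bouquet[OF cac] by simp
  next
    case False
    then have min_degree: "\<forall>v\<in>V. 2 \<le> degree E v"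
      using degree_ge_2_if_bridgeless[OF sg conn no_bridge] by blast
    let ?\<gamma> = "cyclomatic_number V E"
    have "sqrt ?k - ?k / 2 \<le> sqrt ?\<gamma> - ?\<gamma> / 2"
      using one_le_cyclomatic_number[OF sg min_degree] cyclomatic_number_le_num_cycles[OF sg conn]
      by (rule sqrt_minus_half_antimono)
    then have "(real (card V) - ?k - 1) / 2 + sqrt ?k \<le> (real (card V) - ?\<gamma> - 1) / 2 + sqrt ?\<gamma>"
      by (simp add: field_simps)
    also have "\<dots> \<le> randic E" by (rule randic_ge_cyclomatic[OF sg min_degree])
    finally show ?thesis .
  qed
  then show ?thesis using randic_bouquet[OF cac] by simp
qed

end
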